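(* Let $\mathbf{S_2}=(\rho,\sigma,\tau)=\big(1+\frac{-1+i\sqrt3}{2}\cdot\frac{1+\sqrt5}{2},\,1,\,1\big)$. For $p\in\{4,5\}$, the group $\Gamma=\mathcal{T}(p,\mathbf{S_2})$ is generated by $\mathrm{Stab}_\Gamma(m(R_1))\cup\mathrm{Stab}_\Gamma(m(A))$, where $A=(R_1R_2R_3R_2^{-1})^5$.
   Context: Let $p\ge2$ be an integer and $(\rho,\sigma,\tau)\in\mathbb{C}^3$. Set $u=e^{2\pi i/(3p)}$, $\alpha=2-u^3-\bar u^3$, $\beta_1=(\bar u^2-u)\rho$, $\beta_2=(\bar u^2-u)\sigma$, $\beta_3=(\bar u^2-u)\tau$, and $H=\begin{pmatrix}\alpha&\beta_1&\bar\beta_3\\ \bar\beta_1&\alpha&\beta_2\\ \beta_3&\bar\beta_2&\alpha\end{pmatrix}$, a Hermitian matrix (of signature $(2,1)$ for the parameters considered) defining the form $\langle X,Y\rangle=Y^*HX$. Let $R_1=\begin{pmatrix}u^2&\rho&-u\bar\tau\\0&\bar u&0\\0&0&\bar u\end{pmatrix}$, $R_2=\begin{pmatrix}\bar u&0&0\\-u\bar\rho&u^2&\sigma\\0&0&\bar u\end{pmatrix}$, $R_3=\begin{pmatrix}\bar u&0&0\\0&\bar u&0\\ \tau&-u\bar\sigma&u^2\end{pmatrix}$. The group $\mathcal{T}(p,(\rho,\sigma,\tau))$ is the subgroup of $U(H)$ generated by $R_1,R_2,R_3$, acting on $H^2_{\mathbb{C}}=\{[X]:\langle X,X\rangle<0\}$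 through its image in $PU(H)$; all statements refer to this image. $R_1$ and $A$ are complex reflections (non-identity elements fixing pointwise a complex line) for these $p$; $m(\cdot)$ denotes the mirror (fixed complex line), and $\mathrm{Stab}_\Gamma(m)$ is the setwise stabilizer of $m$ in $\Gamma$. *)

theory Defs
  imports "HOL-Analysis.Analysis"
begin

type_synonym cmat = "complex ^ 3 ^ 3"
type_synonym cvec = "complex ^ 3"

text \<open>Rows are listed first: (vector [r1, r2, r3]) $ i $ j is the (i,j) entry.\<close>

definition uu :: "nat \<Rightarrow> complex" where
  "uu p = exp (2 * pi * \<i> / (3 * of_nat p))"

definition Hmat :: "nat \<Rightarrow> complex \<Rightarrow> complex \<Rightarrow> complex \<Rightarrow> cmat" where
  "Hmat p \<rho> \<sigma> \<tau> =
    (let u = uu p; \<alpha> = 2 - u^3 - cnj u ^ 3; c = cnj u ^ 2 - u;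
         \<beta>1 = c * \<rho>; \<beta>2 = c * \<sigma>; \<beta>3 = c * \<tau>
     in vector [vector [\<alpha>, \<beta>1, cnj \<beta>3],
                vector [cnj \<beta>1, \<alpha>, \<beta>2],
                vector [\<beta>3, cnj \<beta>2, \<alpha>]])"

definition hform :: "cmat \<Rightarrow> cvec \<Rightarrow> cvec \<Rightarrow> complex" where
  "hform H X Y = (\<Sum>i\<in>UNIV. cnj (Y $ i) * ((H *v X) $ i))"

definition R1 :: "nat \<Rightarrow> complex \<Rightarrow> complex \<Rightarrow> complex \<Rightarrow> cmat" where
  "R1 p \<rho> \<sigma> \<tau> = (let u = uu p in
     vector [vector [u^2, \<rho>, - u * cnj \<tau>],
             vector [0, cnj u, 0],
             vector [0, 0, cnj u]])"

definition R2 :: "nat \<Rightarrow> complex \<Rightarrow> complex \<Rightarrow> complex \<Rightarrow> cmat" where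
  "R2 p \<rho> \<sigma> \<tau> = (let u = uu p in
     vector [vector [cnj u, 0, 0],
             vector [- u * cnj \<rho>, u^2, \<sigma>],
             vector [0, 0, cnj u]])"

definition R3 :: "nat \<Rightarrow> complex \<Rightarrow> complex \<Rightarrow> complex \<Rightarrow> cmat" where
  "R3 p \<rho> \<sigma> \<tau> = (let u = uu p in
     vector [vector [cnj u, 0, 0],
             vector [0, cnj u, 0],
             vector [\<tau>, - u * cnj \<sigma>, u^2]])"

inductive_set gen_grp :: "cmat set \<Rightarrow> cmat set" for S where
  gen_one: "mat 1 \<in> gen_grp S"
| gen_elem: "g \<in> S \<Longrightarrow> g \<in> gen_grp S"
| gen_inv: "g \<in> S \<Longrightarrow> matrix_inv g \<in> gen_grp S"
| gen_mult: "a \<in> gen_grp S \<Longrightarrow> b \<in> gen_grp S \<Longrightarrow> a ** b \<in> gen_grp S"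

definition TGroup :: "nat \<Rightarrow> complex \<Rightarrow> complex \<Rightarrow> complex \<Rightarrow> cmat set" where
  "TGroup p \<rho> \<sigma> \<tau> = gen_grp {R1 p \<rho> \<sigma> \<tau>, R2 p \<rho> \<sigma> \<tau>, R3 p \<rho> \<sigma> \<tau>}"

text \<open>Mirror of g in complex hyperbolic space, as the cone of negative vectors X whose
  projective class [X] is fixed by g (for a complex reflection this is the fixed complex line).\<close>
definition mirror :: "cmat \<Rightarrow> cmat \<Rightarrow> cvec set" where
  "mirror H g = {X. Re (hform H X X) < 0 \<and> (\<exists>c. g *v X = c *s X)}"

text \<open>Setwise stabilizer of a (scaling-invariant) set of vectors, i.e. of the corresponding
  set of points of the projective ball.\<close>
definition Stab :: "cmat set \<Rightarrow> cvec set \<Rightarrow> cmat set" where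
  "Stab \<Gamma> M = {g \<in> \<Gamma>. (\<lambda>X. g *v X) ` M = M}"

definition rhoS2 :: complex where
  "rhoS2 = 1 + ((-1 + \<i> * sqrt 3) / 2) * ((1 + sqrt 5) / 2)"

end

(* An element of Gamma commuting with a complex reflection R maps the mirror of R onto itself, so
   it suffices to write R1, R2, R3 as products of elements of Gamma commuting with R1 or with A.
   Such elements are R1, y = R2 R3 R2^-1 R1 R3^-1 R2 R3 R1 R2 R1 R3 and y^-1 (commuting with R1),
   and x = R3^-1 R2^-1 R3 and x^-1 (commuting with A); indeed

     R3 = R1^-1 x y x^-1 y^-1 x^-1 R1   and   R2 = R3 x^-1 R3^-1.

   The commutations and the identity for R3 are checked by exact computation: all matrix entries
   lie in Z[zeta12, golden_ratio] (p = 4) or in Z[zeta5, omega] (p = 5), both of the form Z[x, y]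
   with x quartic and y quadratic over Z, so matrices can be multiplied on integer coordinates. *)

theory Submission
  imports Defs
begin

lemma invertible_matrix_inv_mult:
  assumes "invertible A"
  shows "A ** matrix_inv A = mat 1" and "matrix_inv A ** A = mat 1"
  using someI_ex[OF assms[unfolded invertible_def]] unfolding matrix_inv_def by blast+

lemma matrix_inv_eq:
  fixes A B :: "'a::field^'n^'n"
  assumes "A ** B = mat 1"
  shows "matrix_inv A = B"
proof -
  have "B ** A = mat 1"
    using assms matrix_left_right_inverse by blast
  with assms have "invertible A"
    unfolding invertible_def by blast
  have "matrix_inv A = matrix_inv A ** (A ** B)"
    using assms by simp
  also have "\<dots> = B"
    using invertible_matrix_inv_mult(2)[OF \<open>invertible A\<close>] by (simp add: matrix_mul_assoc)
  finally show ?thesis .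
qed

lemma invertible_matrix_inv:
  fixes A :: "'a::field^'n^'n"
  shows "invertible A \<Longrightarrow> invertible (matrix_inv A)"
  using invertible_matrix_inv_mult unfolding invertible_def by blast

lemma matrix_inv_matrix_inv:
  fixes A :: "'a::field^'n^'n"
  shows "invertible A \<Longrightarrow> matrix_inv (matrix_inv A) = A"
  by (rule matrix_inv_eq) (rule invertible_matrix_inv_mult(2))

lemma matrix_inv_mult:
  fixes A B :: "'a::field^'n^'n"
  assumes "invertible A" and "invertible B"
  shows "matrix_inv (A ** B) = matrix_inv B ** matrix_inv A"
proof (rule matrix_inv_eq)
  have "A ** B ** (matrix_inv B ** matrix_inv A) = A ** (B ** matrix_inv B) ** matrix_inv A"
    by (simp add: matrix_mul_assoc)
  then show "A ** B ** (matrix_inv B ** matrix_inv A) = mat 1"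
    using assms by (simp add: invertible_matrix_inv_mult)
qed

lemma matrix_inv_commute:
  fixes A R :: "'a::field^'n^'n"
  assumes "invertible A" and "A ** R = R ** A"
  shows "matrix_inv A ** R = R ** matrix_inv A"
proof -
  note inv = invertible_matrix_inv_mult[OF assms(1)]
  have "matrix_inv A ** R = matrix_inv A ** R ** (A ** matrix_inv A)"
    using inv by simp
  also have "\<dots> = matrix_inv A ** (A ** R) ** matrix_inv A"
    using assms(2) by (simp add: matrix_mul_assoc)
  also have "\<dots> = R ** matrix_inv A"
    by (metis inv(2) matrix_mul_assoc matrix_mul_lid)
  finally show ?thesis .
qed

definition cnj_transpose :: "complex^'n^'m \<Rightarrow> complex^'m^'n" where
  "cnj_transpose A = (\<chi> i j. cnj (A $ j $ i))"

lemma cnj_transpose_mult: "cnj_transpose (A ** B) = cnj_transpose B ** cnj_transpose A"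
  by (simp add: cnj_transpose_def vec_eq_iff matrix_matrix_mult_def cnj_sum mult.commute)

lemma cnj_transpose_mat_1: "cnj_transpose (mat 1) = mat 1"
  by (simp add: cnj_transpose_def vec_eq_iff mat_def)

definition unitary_wrt :: "complex^'n^'n \<Rightarrow> complex^'n^'n \<Rightarrow> bool" where
  "unitary_wrt H g \<longleftrightarrow> cnj_transpose g ** H ** g = H"

lemma unitary_wrt_mult:
  assumes "unitary_wrt H a" and "unitary_wrt H b"
  shows "unitary_wrt H (a ** b)"
proof -
  have "cnj_transpose (a ** b) ** H ** (a ** b) = cnj_transpose b ** (cnj_transpose a ** H ** a) ** b"
    by (simp add: cnj_transpose_mult matrix_mul_assoc)
  then show ?thesis
    using assms by (simp add: unitary_wrt_def)
qed

lemma unitary_wrt_matrix_inv: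
  assumes "invertible g" and "unitary_wrt H g"
  shows "unitary_wrt H (matrix_inv g)"
proof -
  let ?g' = "matrix_inv g"
  have "cnj_transpose ?g' ** H ** ?g' = cnj_transpose ?g' ** (cnj_transpose g ** H ** g) ** ?g'"
    using assms(2) by (simp add: unitary_wrt_def)
  also have "\<dots> = cnj_transpose (g ** ?g') ** H ** (g ** ?g')"
    by (simp add: cnj_transpose_mult matrix_mul_assoc)
  finally show ?thesis
    using assms(1) by (simp add: unitary_wrt_def invertible_matrix_inv_mult cnj_transpose_mat_1)
qed

lemma hform_unitary:
  assumes "unitary_wrt H g"
  shows "hform H (g *v X) (g *v X) = hform H X X"
proof -
  have "hform H (g *v X) (g *v Y) = hform (cnj_transpose g ** H ** g) X Y" for X Y
    unfolding hform_def matrix_vector_mult_def matrix_matrix_mult_def cnj_transpose_def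
    by (simp add: sum_3 algebra_simps)
  then show ?thesis
    using assms by (simp add: unitary_wrt_def)
qed

lemma invertible_gen_grp:
  assumes "\<And>s. s \<in> S \<Longrightarrow> invertible s" and "g \<in> gen_grp S"
  shows "invertible g"
  using assms(2)
proof induction
  case gen_one
  show ?case by (metis invertible_def matrix_mul_lid)
qed (auto intro: assms(1) invertible_matrix_inv invertible_mult)

lemma matrix_inv_gen_grp:
  assumes "\<And>s. s \<in> S \<Longrightarrow> invertible s" and "g \<in> gen_grp S"
  shows "matrix_inv g \<in> gen_grp S"
  using assms(2)
proof induction
  case gen_one
  have "matrix_inv (mat 1 :: cmat) = mat 1"
    by (rule matrix_inv_eq) simp
  then show ?case by (simp add: gen_grp.gen_one)
next
  case (gen_elem g)
  then show ?case by (rule gen_grp.gen_inv)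
next
  case (gen_inv g)
  then show ?case by (simp add: assms(1) matrix_inv_matrix_inv gen_grp.gen_elem)
next
  case (gen_mult a b)
  then show ?case
    using invertible_gen_grp[OF assms(1)] by (simp add: matrix_inv_mult gen_grp.gen_mult)
qed

lemma gen_grp_subset:
  assumes "T \<subseteq> gen_grp S" and "\<And>t. t \<in> T \<Longrightarrow> matrix_inv t \<in> gen_grp S"
  shows "gen_grp T \<subseteq> gen_grp S"
proof
  fix g assume "g \<in> gen_grp T"
  then show "g \<in> gen_grp S"
    by induction (use assms in \<open>auto intro: gen_grp.intros\<close>)
qed

lemma gen_grp_eqI:
  assumes "\<And>s. s \<in> S \<Longrightarrow> invertible s" and "T \<subseteq> gen_grp S" and "S \<subseteq> gen_grp T"
  shows "gen_grp T = gen_grp S"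
proof
  show "gen_grp T \<subseteq> gen_grp S"
    by (rule gen_grp_subset) (use assms(2) matrix_inv_gen_grp[OF assms(1)] in blast)+
  have T_invertible: "t \<in> T \<Longrightarrow> invertible t" for t
    using assms(1,2) invertible_gen_grp by blast
  show "gen_grp S \<subseteq> gen_grp T"
    by (rule gen_grp_subset) (use assms(3) matrix_inv_gen_grp[OF T_invertible] in blast)+
qed

lemma unitary_wrt_gen_grp:
  assumes "\<And>s. s \<in> S \<Longrightarrow> invertible s \<and> unitary_wrt H s" and "g \<in> gen_grp S"
  shows "unitary_wrt H g"
  using assms(2)
proof induction
  case gen_one
  show ?case by (simp add: unitary_wrt_def cnj_transpose_mat_1)
qed (auto simp: assms unitary_wrt_mult unitary_wrt_matrix_inv)

section \<open>Mirrors and their stabilisers\<close>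

lemma mirror_image_subset:
  assumes "unitary_wrt H g" and "g ** R = R ** g"
  shows "(\<lambda>X. g *v X) ` mirror H R \<subseteq> mirror H R"
proof clarify
  fix X assume "X \<in> mirror H R"
  then obtain c where neg: "Re (hform H X X) < 0" and "R *v X = c *s X"
    unfolding mirror_def by blast
  then have "R *v (g *v X) = c *s (g *v X)"
    using assms(2) by (metis matrix_vector_mul_assoc vector_scalar_commute)
  then show "g *v X \<in> mirror H R"
    using neg hform_unitary[OF assms(1)] unfolding mirror_def by auto
qed

lemma commuting_in_Stab_mirror:
  assumes "g \<in> \<Gamma>" and "invertible g" and "unitary_wrt H g" and "g ** R = R ** g"
  shows "g \<in> Stab \<Gamma> (mirror H R)"
proof -
  let ?g' = "matrix_inv g"
  have "?g' *v X \<in> mirror H R" if "X \<in> mirror H R" for X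
    using mirror_image_subset[OF unitary_wrt_matrix_inv matrix_inv_commute] assms that by blast
  moreover have "X = g *v (?g' *v X)" for X
    using assms(2) by (simp add: matrix_vector_mul_assoc invertible_matrix_inv_mult)
  ultimately have "mirror H R \<subseteq> (\<lambda>X. g *v X) ` mirror H R"
    by blast
  with mirror_image_subset[OF assms(3,4)] show ?thesis
    using assms(1) unfolding Stab_def by blast
qed

definition omega :: complex where
  "omega = exp (2 * pi * \<i> / 3)"

definition zeta5 :: complex where
  "zeta5 = exp (2 * pi * \<i> / 5)"

definition golden_ratio :: complex where
  "golden_ratio = (1 + sqrt 5) / 2"

lemma omega_eq: "omega = (-1 + \<i> * sqrt 3) / 2"
proof -
  have angle: "2 * pi / 3 = pi - pi / 3" by simp
  have "omega = cis (2 * pi / 3)"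
    by (simp add: omega_def cis_conv_exp mult.commute)
  moreover have "cos (2 * pi / 3) = - 1 / 2"
    unfolding angle cos_pi_minus cos_60 by simp
  moreover have "sin (2 * pi / 3) = sqrt 3 / 2"
    unfolding angle sin_pi_minus sin_60 by simp
  ultimately show ?thesis by (simp add: complex_eq_iff cis.code)
qed

lemma omega_square: "omega ^ 2 = -1 - omega"
  by (simp add: omega_eq power2_eq_square complex_eq_iff field_simps)

lemma cnj_omega: "cnj omega = -1 - omega"
  by (simp add: omega_eq complex_eq_iff)

lemma golden_ratio_square: "golden_ratio ^ 2 = 1 + golden_ratio"
  unfolding golden_ratio_def by (simp add: power2_eq_square field_simps flip: of_real_mult)

lemma cnj_golden_ratio: "cnj golden_ratio = golden_ratio"
  by (simp add: golden_ratio_def)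

lemma rhoS2_eq: "rhoS2 = 1 + omega * golden_ratio"
  by (simp add: rhoS2_def omega_eq golden_ratio_def)

lemma uu_power: "uu p ^ n = exp (of_nat n * (2 * pi * \<i> / (3 * of_nat p)))"
  unfolding uu_def by (rule exp_of_nat_mult[symmetric])

lemma uu_power_p: "p > 0 \<Longrightarrow> uu p ^ p = omega"
proof -
  assume "p > 0"
  then have "of_nat p * (2 * pi * \<i> / (3 * of_nat p)) = 2 * pi * \<i> / 3"
    by (simp add: field_simps)
  then show ?thesis by (simp only: uu_power omega_def)
qed

lemma cnj_uu_mult: "cnj (uu p) * uu p = 1"
  by (simp add: uu_def exp_cnj flip: exp_add)

lemma uu4_power4: "uu 4 ^ 4 = uu 4 ^ 2 - 1"
proof -
  have "uu 4 ^ 2 = exp (\<i> * of_real (pi / 3))"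
    by (simp add: uu_power field_simps)
  also have "\<dots> = cis (pi / 3)"
    by (simp add: cis_conv_exp)
  finally have sq: "uu 4 ^ 2 = (1 + \<i> * sqrt 3) / 2"
    by (simp add: complex_eq_iff cis.code cos_60 sin_60)
  have "uu 4 ^ 4 = (uu 4 ^ 2) ^ 2" by simp
  also have "\<dots> = (1 + \<i> * sqrt 3) / 2 - 1"
    unfolding sq by (simp add: power2_eq_square field_simps complex_eq_iff)
  finally show ?thesis by (simp add: sq)
qed

lemma cnj_uu4: "cnj (uu 4) = uu 4 - uu 4 ^ 3"
proof -
  have "uu 4 * (uu 4 - uu 4 ^ 3) = 1"
    using uu4_power4 by algebra
  then show ?thesis
    using cnj_uu_mult[of 4] by algebra
qed

lemma zeta5_power5: "zeta5 ^ 5 = 1"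
proof -
  have "of_nat 5 * (2 * pi * \<i> / 5) = 2 * of_real pi * \<i>"
    by simp
  then show ?thesis
    unfolding zeta5_def by (simp only: exp_two_pi_i flip: exp_of_nat_mult)
qed

lemma zeta5_power4: "zeta5 ^ 4 = -1 - zeta5 - zeta5 ^ 2 - zeta5 ^ 3"
proof -
  have "zeta5 \<noteq> 1"
  proof
    assume "zeta5 = 1"
    then obtain n :: int where "2 * pi / 5 = of_int (2 * n) * pi"
      by (auto simp: zeta5_def exp_eq_1)
    then have "(1::real) = of_int (5 * n)" by (simp add: field_simps)
    then have "(1::int) = 5 * n" by linarith
    then show False by presburger
  qed
  moreover have "(zeta5 - 1) * (1 + zeta5 + zeta5 ^ 2 + zeta5 ^ 3 + zeta5 ^ 4) = 0"
    using zeta5_power5 by algebra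
  ultimately have "1 + zeta5 + zeta5 ^ 2 + zeta5 ^ 3 + zeta5 ^ 4 = 0"
    by simp
  then show ?thesis
    by algebra
qed

lemma cnj_zeta5: "cnj zeta5 = zeta5 ^ 4"
proof -
  have "cnj zeta5 * zeta5 = 1"
    by (simp add: zeta5_def exp_cnj flip: exp_add)
  then show ?thesis
    using zeta5_power5 by algebra
qed

lemma negative_golden_root:
  fixes r :: real
  assumes "r ^ 2 + r - 1 = 0" and "r < 0"
  shows "r = - (1 + sqrt 5) / 2"
proof -
  have "(2 * r + 1) ^ 2 = sqrt 5 ^ 2"
    using assms(1) by (simp add: power2_eq_square algebra_simps)
  then consider "2 * r + 1 = sqrt 5" | "2 * r + 1 = - sqrt 5"
    unfolding power2_eq_iff by blast
  then show ?thesis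
  proof cases
    case 1
    have "1 < sqrt 5" by (simp add: real_less_rsqrt)
    with 1 assms(2) show ?thesis by simp
  qed simp
qed

lemma golden_ratio_zeta5: "golden_ratio = - (zeta5 ^ 2 + zeta5 ^ 3)"
proof -
  define r where "r = 2 * cos (4 * pi / 5)"
  have "cnj (zeta5 ^ 2) = zeta5 ^ 3"
    using zeta5_power5 unfolding complex_cnj_power cnj_zeta5 by algebra
  moreover have "zeta5 ^ 2 = cis (4 * pi / 5)"
    by (simp add: zeta5_def cis_conv_exp field_simps flip: exp_of_nat_mult)
  ultimately have s: "zeta5 ^ 2 + zeta5 ^ 3 = of_real r"
    by (metis complex_add_cnj cis.sel(1) r_def)
  have "(zeta5 ^ 2 + zeta5 ^ 3) ^ 2 + (zeta5 ^ 2 + zeta5 ^ 3) - 1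
      = (zeta5 ^ 4 + 1 + zeta5 + zeta5 ^ 2 + zeta5 ^ 3) + (zeta5 ^ 5 - 1) * (2 + zeta5)"
    by algebra
  then have "of_real (r ^ 2 + r - 1) = (0::complex)"
    using zeta5_power4 zeta5_power5 unfolding s by simp
  then have "r ^ 2 + r - 1 = 0"
    by (simp only: of_real_eq_0_iff)
  moreover have "r < 0"
  proof -
    have "0 < cos (pi / 5)" by (rule cos_gt_zero_pi) (use pi_gt_zero in linarith)+
    then show ?thesis
      using cos_pi_minus[of "pi / 5"] by (simp add: r_def)
  qed
  ultimately have "r = - (1 + sqrt 5) / 2"
    by (rule negative_golden_root)
  then show ?thesis
    unfolding s golden_ratio_def
    by (metis minus_divide_left minus_minus of_real_1 of_real_add of_real_divide of_real_minus
        of_real_numeral)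
qed

lemma uu5_eq: "uu 5 = omega ^ 2 * zeta5 ^ 2"
proof -
  have "uu 5 = exp (2 * pi * \<i> / 15) * exp (2 * of_real pi * \<i>)"
    by (simp add: uu_def exp_two_pi_i)
  also have "\<dots> = exp (2 * (2 * pi * \<i> / 3)) * exp (2 * (2 * pi * \<i> / 5))"
    unfolding exp_add[symmetric] by (rule arg_cong[where f = exp]) (simp add: field_simps)
  also have "\<dots> = omega ^ 2 * zeta5 ^ 2"
    by (simp only: omega_def zeta5_def exp_of_nat_mult[of 2, simplified])
  finally show ?thesis .
qed

section \<open>Exact arithmetic in \<open>\<int>[x, y]\<close>\<close>

datatype zvec4 = Z4 int int int int

fun add4 :: "zvec4 \<Rightarrow> zvec4 \<Rightarrow> zvec4" where
  "add4 (Z4 a0 a1 a2 a3) (Z4 b0 b1 b2 b3) = Z4 (a0 + b0) (a1 + b1) (a2 + b2) (a3 + b3)"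

fun smult4 :: "int \<Rightarrow> zvec4 \<Rightarrow> zvec4" where
  "smult4 k (Z4 a0 a1 a2 a3) = Z4 (k * a0) (k * a1) (k * a2) (k * a3)"

fun times_x :: "zvec4 \<Rightarrow> zvec4 \<Rightarrow> zvec4" where
  "times_x (Z4 c0 c1 c2 c3) (Z4 a0 a1 a2 a3) =
     Z4 (c0 * a3) (a0 + c1 * a3) (a1 + c2 * a3) (a2 + c3 * a3)"

fun mult4 :: "zvec4 \<Rightarrow> zvec4 \<Rightarrow> zvec4 \<Rightarrow> zvec4" where
  "mult4 c (Z4 a0 a1 a2 a3) b =
     add4 (smult4 a0 b)
       (times_x c (add4 (smult4 a1 b) (times_x c (add4 (smult4 a2 b) (times_x c (smult4 a3 b))))))"

fun cnj4 :: "zvec4 \<Rightarrow> zvec4 \<Rightarrow> zvec4 \<Rightarrow> zvec4" where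
  "cnj4 c xb (Z4 a0 a1 a2 a3) =
     add4 (Z4 a0 0 0 0)
       (mult4 c xb (add4 (Z4 a1 0 0 0) (mult4 c xb (add4 (Z4 a2 0 0 0) (mult4 c xb (Z4 a3 0 0 0))))))"

fun eval4 :: "complex \<Rightarrow> zvec4 \<Rightarrow> complex" where
  "eval4 x (Z4 a0 a1 a2 a3) = of_int a0 + of_int a1 * x + of_int a2 * x ^ 2 + of_int a3 * x ^ 3"

lemma eval4_add [simp]: "eval4 x (add4 a b) = eval4 x a + eval4 x b"
  by (cases a; cases b) (simp add: algebra_simps)

lemma eval4_smult [simp]: "eval4 x (smult4 k a) = of_int k * eval4 x a"
  by (cases a) (simp add: algebra_simps)

lemma eval4_times_x:
  assumes "x ^ 4 = eval4 x c"
  shows "eval4 x (times_x c a) = x * eval4 x a"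
proof -
  obtain a0 a1 a2 a3 where a: "a = Z4 a0 a1 a2 a3" by (cases a)
  obtain c0 c1 c2 c3 where c: "c = Z4 c0 c1 c2 c3" by (cases c)
  show ?thesis
    using assms unfolding a c by simp algebra
qed

lemma eval4_mult: "x ^ 4 = eval4 x c \<Longrightarrow> eval4 x (mult4 c a b) = eval4 x a * eval4 x b"
  by (cases a) (simp add: eval4_times_x algebra_simps power_numeral_reduce)

lemma eval4_cnj:
  "x ^ 4 = eval4 x c \<Longrightarrow> cnj x = eval4 x xb \<Longrightarrow> eval4 x (cnj4 c xb a) = cnj (eval4 x a)"
  by (cases a) (simp add: eval4_mult algebra_simps power_numeral_reduce)

record tower =
  rel_x :: zvec4
  rel_y0 :: int
  rel_y1 :: int
  cnj_x :: zvec4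
  cnj_y0 :: int
  cnj_y1 :: int

definition tower_model :: "tower \<Rightarrow> complex \<Rightarrow> complex \<Rightarrow> bool" where
  "tower_model T x y \<longleftrightarrow>
     x ^ 4 = eval4 x (rel_x T) \<and> y ^ 2 = of_int (rel_y0 T) + of_int (rel_y1 T) * y \<and>
     cnj x = eval4 x (cnj_x T) \<and> cnj y = of_int (cnj_y0 T) + of_int (cnj_y1 T) * y"

datatype zvec8 = Z8 zvec4 zvec4

definition const8 :: "int \<Rightarrow> zvec8" where
  "const8 k = Z8 (Z4 k 0 0 0) (Z4 0 0 0 0)"

fun add8 :: "zvec8 \<Rightarrow> zvec8 \<Rightarrow> zvec8" where
  "add8 (Z8 a b) (Z8 a' b') = Z8 (add4 a a') (add4 b b')"

fun neg8 :: "zvec8 \<Rightarrow> zvec8" where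
  "neg8 (Z8 a b) = Z8 (smult4 (-1) a) (smult4 (-1) b)"

fun mult8 :: "tower \<Rightarrow> zvec8 \<Rightarrow> zvec8 \<Rightarrow> zvec8" where
  "mult8 T (Z8 a b) (Z8 a' b') =
     (let c = rel_x T; bb = mult4 c b b'
      in Z8 (add4 (mult4 c a a') (smult4 (rel_y0 T) bb))
            (add4 (add4 (mult4 c a b') (mult4 c b a')) (smult4 (rel_y1 T) bb)))"

fun cnj8 :: "tower \<Rightarrow> zvec8 \<Rightarrow> zvec8" where
  "cnj8 T (Z8 a b) =
     (let c = rel_x T; b' = cnj4 c (cnj_x T) b
      in Z8 (add4 (cnj4 c (cnj_x T) a) (smult4 (cnj_y0 T) b')) (smult4 (cnj_y1 T) b'))"

fun eval8 :: "complex \<Rightarrow> complex \<Rightarrow> zvec8 \<Rightarrow> complex" where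
  "eval8 x y (Z8 a b) = eval4 x a + y * eval4 x b"

lemma eval8_const [simp]: "eval8 x y (const8 k) = of_int k"
  by (simp add: const8_def)

lemma eval8_add [simp]: "eval8 x y (add8 a b) = eval8 x y a + eval8 x y b"
  by (cases a; cases b) (simp add: algebra_simps)

lemma eval8_neg [simp]: "eval8 x y (neg8 a) = - eval8 x y a"
  by (cases a) (simp add: algebra_simps)

lemma eval8_mult:
  assumes "tower_model T x y"
  shows "eval8 x y (mult8 T a b) = eval8 x y a * eval8 x y b"
proof (cases a; cases b)
  fix a0 a1 b0 b1 assume [simp]: "a = Z8 a0 a1" "b = Z8 b0 b1"
  have "y ^ 2 = of_int (rel_y0 T) + of_int (rel_y1 T) * y" and "x ^ 4 = eval4 x (rel_x T)"
    using assms by (simp_all add: tower_model_def)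
  then show ?thesis
    by (simp add: Let_def eval4_mult) algebra
qed

lemma eval8_cnj:
  assumes "tower_model T x y"
  shows "eval8 x y (cnj8 T a) = cnj (eval8 x y a)"
proof (cases a)
  case (Z8 a0 a1)
  have "x ^ 4 = eval4 x (rel_x T)" "cnj x = eval4 x (cnj_x T)"
    and "cnj y = of_int (cnj_y0 T) + of_int (cnj_y1 T) * y"
    using assms by (simp_all add: tower_model_def)
  then show ?thesis
    by (simp add: Z8 Let_def eval4_cnj algebra_simps)
qed

definition tower_of :: "nat \<Rightarrow> tower" where
  "tower_of p = (if p = 4
     then \<lparr>rel_x = Z4 (-1) 0 1 0, rel_y0 = 1, rel_y1 = 1,
           cnj_x = Z4 0 1 0 (-1), cnj_y0 = 0, cnj_y1 = 1\<rparr>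
     else \<lparr>rel_x = Z4 (-1) (-1) (-1) (-1), rel_y0 = -1, rel_y1 = -1,
           cnj_x = Z4 (-1) (-1) (-1) (-1), cnj_y0 = -1, cnj_y1 = -1\<rparr>)"

definition tower_x :: "nat \<Rightarrow> complex" where
  "tower_x p = (if p = 4 then uu 4 else zeta5)"

definition tower_y :: "nat \<Rightarrow> complex" where
  "tower_y p = (if p = 4 then golden_ratio else omega)"

abbreviation eval_at :: "nat \<Rightarrow> zvec8 \<Rightarrow> complex" where
  "eval_at p \<equiv> eval8 (tower_x p) (tower_y p)"

lemma tower_model_tower_of:
  assumes "p \<in> {4, 5}"
  shows "tower_model (tower_of p) (tower_x p) (tower_y p)"
proof -
  have "tower_model (tower_of 4) (uu 4) golden_ratio"
    using uu4_power4 golden_ratio_square cnj_uu4 cnj_golden_ratio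
    by (simp add: tower_model_def tower_of_def)
  moreover have "tower_model (tower_of 5) zeta5 omega"
    using zeta5_power4 omega_square cnj_zeta5 cnj_omega
    by (simp add: tower_model_def tower_of_def)
  ultimately show ?thesis
    using assms by (auto simp: tower_x_def tower_y_def)
qed

(* For p = 5: uu 5 = omega^2 zeta5^2 = -(1 + omega) zeta5^2 and
   rhoS2 = 1 + omega golden_ratio = 1 - omega (zeta5^2 + zeta5^3). *)
definition zu :: "nat \<Rightarrow> zvec8" where
  "zu p = (if p = 4 then Z8 (Z4 0 1 0 0) (Z4 0 0 0 0) else Z8 (Z4 0 0 (-1) 0) (Z4 0 0 (-1) 0))"

definition zrho :: "nat \<Rightarrow> zvec8" where
  "zrho p = (if p = 4 then Z8 (Z4 1 0 0 0) (Z4 (-1) 0 1 0) else Z8 (Z4 1 0 0 0) (Z4 0 0 (-1) (-1)))"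

lemma eval_zu:
  assumes "p \<in> {4, 5}"
  shows "eval_at p (zu p) = uu p"
proof -
  have "- (zeta5 ^ 2) - omega * zeta5 ^ 2 = omega ^ 2 * zeta5 ^ 2"
    using omega_square by algebra
  then show ?thesis
    using assms by (auto simp: zu_def tower_x_def tower_y_def uu5_eq)
qed

lemma eval_zrho:
  assumes "p \<in> {4, 5}"
  shows "eval_at p (zrho p) = rhoS2"
proof -
  have "omega = uu 4 ^ 2 - 1"
    using uu_power_p[of 4] uu4_power4 by simp
  then have "eval_at 4 (zrho 4) = rhoS2"
    by (simp add: zrho_def tower_x_def tower_y_def rhoS2_eq)
  moreover have "eval_at 5 (zrho 5) = rhoS2"
    by (simp add: zrho_def tower_x_def tower_y_def rhoS2_eq golden_ratio_zeta5 algebra_simps)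
  ultimately show ?thesis
    using assms by auto
qed

datatype zmat3 = ZM3 zvec8 zvec8 zvec8 zvec8 zvec8 zvec8 zvec8 zvec8 zvec8

fun mat3_mult :: "tower \<Rightarrow> zmat3 \<Rightarrow> zmat3 \<Rightarrow> zmat3" where
  "mat3_mult T (ZM3 a11 a12 a13 a21 a22 a23 a31 a32 a33) (ZM3 b11 b12 b13 b21 b22 b23 b31 b32 b33) =
    (let dot = \<lambda>a1 a2 a3 b1 b2 b3. add8 (add8 (mult8 T a1 b1) (mult8 T a2 b2)) (mult8 T a3 b3)
     in ZM3 (dot a11 a12 a13 b11 b21 b31) (dot a11 a12 a13 b12 b22 b32) (dot a11 a12 a13 b13 b23 b33)
            (dot a21 a22 a23 b11 b21 b31) (dot a21 a22 a23 b12 b22 b32) (dot a21 a22 a23 b13 b23 b33)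
            (dot a31 a32 a33 b11 b21 b31) (dot a31 a32 a33 b12 b22 b32) (dot a31 a32 a33 b13 b23 b33))"

fun mat3_adj :: "tower \<Rightarrow> zmat3 \<Rightarrow> zmat3" where
  "mat3_adj T (ZM3 a11 a12 a13 a21 a22 a23 a31 a32 a33) =
    ZM3 (cnj8 T a11) (cnj8 T a21) (cnj8 T a31) (cnj8 T a12) (cnj8 T a22) (cnj8 T a32)
        (cnj8 T a13) (cnj8 T a23) (cnj8 T a33)"

definition mat3_one :: zmat3 where
  "mat3_one = ZM3 (const8 1) (const8 0) (const8 0) (const8 0) (const8 1) (const8 0)
                  (const8 0) (const8 0) (const8 1)"

fun mat3_eval :: "complex \<Rightarrow> complex \<Rightarrow> zmat3 \<Rightarrow> cmat" where
  "mat3_eval x y (ZM3 a11 a12 a13 a21 a22 a23 a31 a32 a33) =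
    vector [vector [eval8 x y a11, eval8 x y a12, eval8 x y a13],
            vector [eval8 x y a21, eval8 x y a22, eval8 x y a23],
            vector [eval8 x y a31, eval8 x y a32, eval8 x y a33]]"

lemma mat3_eval_mult:
  "tower_model T x y \<Longrightarrow> mat3_eval x y (mat3_mult T A B) = mat3_eval x y A ** mat3_eval x y B"
  by (cases A; cases B) (simp add: eval8_mult vec_eq_iff forall_3 matrix_matrix_mult_def sum_3)

lemma mat3_eval_adj:
  "tower_model T x y \<Longrightarrow> mat3_eval x y (mat3_adj T A) = cnj_transpose (mat3_eval x y A)"
  by (cases A) (simp add: eval8_cnj vec_eq_iff forall_3 cnj_transpose_def)

lemma mat3_eval_one: "mat3_eval x y mat3_one = mat 1"
  by (simp add: mat3_one_def vec_eq_iff forall_3 mat_def)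

abbreviation mat3_at :: "nat \<Rightarrow> zmat3 \<Rightarrow> cmat" where
  "mat3_at p \<equiv> mat3_eval (tower_x p) (tower_y p)"

definition zR1 :: "nat \<Rightarrow> zmat3" where
  "zR1 p = (let T = tower_of p; u = zu p; ub = cnj8 T u in
     ZM3 (mult8 T u u) (zrho p) (neg8 u) (const8 0) ub (const8 0) (const8 0) (const8 0) ub)"

definition zR2 :: "nat \<Rightarrow> zmat3" where
  "zR2 p = (let T = tower_of p; u = zu p; ub = cnj8 T u in
     ZM3 ub (const8 0) (const8 0) (neg8 (mult8 T u (cnj8 T (zrho p)))) (mult8 T u u) (const8 1)
         (const8 0) (const8 0) ub)"

definition zR3 :: "nat \<Rightarrow> zmat3" where
  "zR3 p = (let T = tower_of p; u = zu p; ub = cnj8 T u in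
     ZM3 ub (const8 0) (const8 0) (const8 0) ub (const8 0) (const8 1) (neg8 u) (mult8 T u u))"

definition zR1_inv :: "nat \<Rightarrow> zmat3" where
  "zR1_inv p = (let T = tower_of p; u = zu p; ub = cnj8 T u in
     ZM3 (mult8 T ub ub) (neg8 (mult8 T (zrho p) ub)) (const8 1) (const8 0) u (const8 0)
         (const8 0) (const8 0) u)"

definition zR2_inv :: "nat \<Rightarrow> zmat3" where
  "zR2_inv p = (let T = tower_of p; u = zu p; ub = cnj8 T u in
     ZM3 u (const8 0) (const8 0) (cnj8 T (zrho p)) (mult8 T ub ub) (neg8 ub) (const8 0) (const8 0) u)"

definition zR3_inv :: "nat \<Rightarrow> zmat3" where
  "zR3_inv p = (let T = tower_of p; u = zu p; ub = cnj8 T u in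
     ZM3 u (const8 0) (const8 0) (const8 0) u (const8 0) (neg8 ub) (const8 1) (mult8 T ub ub))"

definition zH :: "nat \<Rightarrow> zmat3" where
  "zH p = (let T = tower_of p; u = zu p; ub = cnj8 T u; cube = \<lambda>z. mult8 T z (mult8 T z z);
               a = add8 (add8 (const8 2) (neg8 (cube u))) (neg8 (cube ub));
               c = add8 (mult8 T ub ub) (neg8 u); b = mult8 T c (zrho p)
           in ZM3 a b (cnj8 T c) (cnj8 T b) a c c (cnj8 T c) a)"

lemma exact_generator_inverses:
  assumes "p \<in> {4, 5}"
  shows "mat3_mult (tower_of p) (zR1 p) (zR1_inv p) = mat3_one"
    and "mat3_mult (tower_of p) (zR2 p) (zR2_inv p) = mat3_one"
    and "mat3_mult (tower_of p) (zR3 p) (zR3_inv p) = mat3_one"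
  using assms by safe code_simp+

lemma exact_generators_unitary:
  assumes "p \<in> {4, 5}"
  shows "mat3_mult (tower_of p) (mat3_mult (tower_of p) (mat3_adj (tower_of p) (zR1 p)) (zH p)) (zR1 p)
           = zH p"
    and "mat3_mult (tower_of p) (mat3_mult (tower_of p) (mat3_adj (tower_of p) (zR2 p)) (zH p)) (zR2 p)
           = zH p"
    and "mat3_mult (tower_of p) (mat3_mult (tower_of p) (mat3_adj (tower_of p) (zR3 p)) (zH p)) (zR3 p)
           = zH p"
  using assms by safe code_simp+

definition letter :: "nat \<Rightarrow> char \<Rightarrow> cmat" where
  "letter p ch =
     (if ch = CHR ''a'' then R1 p rhoS2 1 1 else if ch = CHR ''A'' then matrix_inv (R1 p rhoS2 1 1)
      else if ch = CHR ''b'' then R2 p rhoS2 1 1 else if ch = CHR ''B'' then matrix_inv (R2 p rhoS2 1 1)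
      else if ch = CHR ''c'' then R3 p rhoS2 1 1 else if ch = CHR ''C'' then matrix_inv (R3 p rhoS2 1 1)
      else mat 1)"

fun word :: "nat \<Rightarrow> char list \<Rightarrow> cmat" where
  "word p [] = mat 1"
| "word p (ch # w) = letter p ch ** word p w"

definition zletter :: "nat \<Rightarrow> char \<Rightarrow> zmat3" where
  "zletter p ch = (if ch = CHR ''a'' then zR1 p else if ch = CHR ''A'' then zR1_inv p
     else if ch = CHR ''b'' then zR2 p else if ch = CHR ''B'' then zR2_inv p
     else if ch = CHR ''c'' then zR3 p else if ch = CHR ''C'' then zR3_inv p
     else mat3_one)"

fun zword :: "nat \<Rightarrow> char list \<Rightarrow> zmat3" where
  "zword p [] = mat3_one"
| "zword p (ch # w) = mat3_mult (tower_of p) (zletter p ch) (zword p w)"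

lemma word_append: "word p (v @ w) = word p v ** word p w"
  by (induction v) (simp_all add: matrix_mul_assoc)

lemma word_in_TGroup: "word p w \<in> TGroup p rhoS2 1 1"
proof (induction w)
  case Nil
  then show ?case by (simp add: TGroup_def gen_grp.gen_one)
next
  case (Cons ch w)
  have "letter p ch \<in> TGroup p rhoS2 1 1"
    unfolding letter_def TGroup_def by (auto intro: gen_grp.intros)
  with Cons show ?case by (simp add: TGroup_def gen_grp.gen_mult)
qed

lemma word_concat_in_gen_grp:
  "(\<And>t. t \<in> set ts \<Longrightarrow> word p t \<in> S) \<Longrightarrow> word p (concat ts) \<in> gen_grp S"
  by (induction ts) (simp_all add: word_append gen_grp.intros)

definition x_word :: "char list" where "x_word = ''CBc''"
definition x_inv_word :: "char list" where "x_inv_word = ''Cbc''"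
definition y_word :: "char list" where "y_word = ''bcBaCbcabac''"
definition y_inv_word :: "char list" where "y_inv_word = ''CABACBcAbCB''"
definition A_word :: "char list" where "A_word = concat (replicate 5 ''abcB'')"

lemma A_word_eq:
  "word p A_word =
    (let M = R1 p rhoS2 1 1 ** R2 p rhoS2 1 1 ** R3 p rhoS2 1 1 ** matrix_inv (R2 p rhoS2 1 1)
     in M ** M ** M ** M ** M)"
proof -
  have five: "A_word = ''abcB'' @ ''abcB'' @ ''abcB'' @ ''abcB'' @ ''abcB''"
    by (simp add: A_word_def numeral_eq_Suc)
  have "word p A_word =
    word p ''abcB'' ** word p ''abcB'' ** word p ''abcB'' ** word p ''abcB'' ** word p ''abcB''"
    unfolding five word_append by (simp only: matrix_mul_assoc)
  moreover have
    "word p ''abcB'' = R1 p rhoS2 1 1 ** R2 p rhoS2 1 1 ** R3 p rhoS2 1 1 ** matrix_inv (R2 p rhoS2 1 1)"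
    by (simp add: letter_def matrix_mul_assoc)
  ultimately show ?thesis
    by (simp add: Let_def)
qed

lemma exact_word_identities:
  assumes "p \<in> {4, 5}"
  shows "zword p (y_word @ ''a'') = zword p (''a'' @ y_word)"
    and "zword p (y_inv_word @ ''a'') = zword p (''a'' @ y_inv_word)"
    and "zword p (x_word @ A_word) = zword p (A_word @ x_word)"
    and "zword p (x_inv_word @ A_word) = zword p (A_word @ x_inv_word)"
    and "zword p ''c'' = zword p (concat [''A'', x_word, y_word, x_inv_word, y_inv_word, x_inv_word, ''a''])"
  using assms unfolding x_word_def x_inv_word_def y_word_def y_inv_word_def A_word_def
  by safe code_simp+

section \<open>The generators as products of stabiliser elements\<close>

context
  fixes p :: nat
  assumes p: "p \<in> {4, 5}"
begin

lemma mat3_at_mult: "mat3_at p (mat3_mult (tower_of p) A B) = mat3_at p A ** mat3_at p B"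
  by (rule mat3_eval_mult[OF tower_model_tower_of[OF p]])

lemma mat3_at_adj: "mat3_at p (mat3_adj (tower_of p) A) = cnj_transpose (mat3_at p A)"
  by (rule mat3_eval_adj[OF tower_model_tower_of[OF p]])

lemmas eval_at_simps =
  eval8_mult[OF tower_model_tower_of[OF p]] eval8_cnj[OF tower_model_tower_of[OF p]]
  eval_zu[OF p] eval_zrho[OF p]

lemma mat3_at_zR1: "mat3_at p (zR1 p) = R1 p rhoS2 1 1"
  by (simp add: zR1_def R1_def Let_def eval_at_simps power2_eq_square)

lemma mat3_at_zR2: "mat3_at p (zR2 p) = R2 p rhoS2 1 1"
  by (simp add: zR2_def R2_def Let_def eval_at_simps power2_eq_square)

lemma mat3_at_zR3: "mat3_at p (zR3 p) = R3 p rhoS2 1 1"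
  by (simp add: zR3_def R3_def Let_def eval_at_simps power2_eq_square)

lemma mat3_at_zH: "mat3_at p (zH p) = Hmat p rhoS2 1 1"
  by (simp add: zH_def Hmat_def Let_def eval_at_simps power2_eq_square power3_eq_cube mult.assoc)

lemma matrix_inv_generators:
  "matrix_inv (R1 p rhoS2 1 1) = mat3_at p (zR1_inv p)"
  "matrix_inv (R2 p rhoS2 1 1) = mat3_at p (zR2_inv p)"
  "matrix_inv (R3 p rhoS2 1 1) = mat3_at p (zR3_inv p)"
  using arg_cong[OF exact_generator_inverses(1)[OF p], of "mat3_at p"]
    arg_cong[OF exact_generator_inverses(2)[OF p], of "mat3_at p"]
    arg_cong[OF exact_generator_inverses(3)[OF p], of "mat3_at p"]
  by (simp_all add: matrix_inv_eq mat3_at_mult mat3_at_zR1 mat3_at_zR2 mat3_at_zR3 mat3_eval_one)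

lemma generators_invertible_unitary:
  assumes "s \<in> {R1 p rhoS2 1 1, R2 p rhoS2 1 1, R3 p rhoS2 1 1}"
  shows "invertible s \<and> unitary_wrt (Hmat p rhoS2 1 1) s"
proof -
  note transfer = mat3_at_mult mat3_at_adj mat3_at_zR1 mat3_at_zR2 mat3_at_zR3 mat3_at_zH mat3_eval_one
  have "s ** mat3_at p (zR1_inv p) = mat 1 \<or> s ** mat3_at p (zR2_inv p) = mat 1 \<or>
        s ** mat3_at p (zR3_inv p) = mat 1"
    using assms exact_generator_inverses[OF p, THEN arg_cong, of "mat3_at p"] by (auto simp: transfer)
  then have "invertible s"
    using invertible_right_inverse by blast
  moreover have "unitary_wrt (Hmat p rhoS2 1 1) s"
    using assms exact_generators_unitary[OF p, THEN arg_cong, of "mat3_at p"]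
    by (auto simp: unitary_wrt_def transfer)
  ultimately show ?thesis ..
qed

lemma TGroup_invertible_unitary:
  assumes "g \<in> TGroup p rhoS2 1 1"
  shows "invertible g \<and> unitary_wrt (Hmat p rhoS2 1 1) g"
  using invertible_gen_grp[of _ g] unitary_wrt_gen_grp[of _ _ g] generators_invertible_unitary assms
  unfolding TGroup_def by blast

lemma mat3_at_zword: "mat3_at p (zword p w) = word p w"
proof (induction w)
  case (Cons ch w)
  have "mat3_at p (zletter p ch) = letter p ch"
    by (simp add: zletter_def letter_def mat3_at_zR1 mat3_at_zR2 mat3_at_zR3 matrix_inv_generators
        mat3_eval_one)
  with Cons show ?case by (simp add: mat3_at_mult)
qed (simp add: mat3_eval_one)

lemma word_eq_if_zword_eq: "zword p v = zword p w \<Longrightarrow> word p v = word p w"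
  by (metis mat3_at_zword)

lemma word_in_Stab_mirror:
  assumes "word p (w @ v) = word p (v @ w)"
  shows "word p w \<in> Stab (TGroup p rhoS2 1 1) (mirror (Hmat p rhoS2 1 1) (word p v))"
  using commuting_in_Stab_mirror word_in_TGroup TGroup_invertible_unitary[OF word_in_TGroup] assms
  by (simp add: word_append)

lemma generators_in_gen_grp_Stab:
  defines "\<Gamma> \<equiv> TGroup p rhoS2 1 1" and "H \<equiv> Hmat p rhoS2 1 1"
  defines "S \<equiv> Stab \<Gamma> (mirror H (word p ''a'')) \<union> Stab \<Gamma> (mirror H (word p A_word))"
  shows "{R1 p rhoS2 1 1, R2 p rhoS2 1 1, R3 p rhoS2 1 1} \<subseteq> gen_grp S"
proof -
  have commutes_R1_in_S: "word p w \<in> S" if "zword p (w @ ''a'') = zword p (''a'' @ w)" for w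
    using word_in_Stab_mirror[OF word_eq_if_zword_eq[OF that]] unfolding S_def \<Gamma>_def H_def by blast
  have commutes_A_in_S: "word p w \<in> S" if "zword p (w @ A_word) = zword p (A_word @ w)" for w
    using word_in_Stab_mirror[OF word_eq_if_zword_eq[OF that]] unfolding S_def \<Gamma>_def H_def by blast
  have S_invertible: "s \<in> S \<Longrightarrow> invertible s" for s
    using TGroup_invertible_unitary unfolding S_def Stab_def \<Gamma>_def by blast
  have R1_inv: "invertible (R1 p rhoS2 1 1)" and R3_inv: "invertible (R3 p rhoS2 1 1)"
    using generators_invertible_unitary by simp_all
  have R1_in: "word p ''a'' \<in> S"
    by (rule commutes_R1_in_S) simp
  have "word p (''A'' @ ''a'') = word p (''a'' @ ''A'')"
    by (simp add: letter_def invertible_matrix_inv_mult[OF R1_inv])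
  then have R1_inv_in: "word p ''A'' \<in> S"
    using word_in_Stab_mirror unfolding S_def \<Gamma>_def H_def by blast
  note identities = exact_word_identities[OF p]
  have y_in: "word p y_word \<in> S" and y_inv_in: "word p y_inv_word \<in> S"
    by (rule commutes_R1_in_S[OF identities(1)], rule commutes_R1_in_S[OF identities(2)])
  have x_in: "word p x_word \<in> S" and x_inv_in: "word p x_inv_word \<in> S"
    by (rule commutes_A_in_S[OF identities(3)], rule commutes_A_in_S[OF identities(4)])
  have R3_in: "word p ''c'' \<in> gen_grp S"
    unfolding word_eq_if_zword_eq[OF identities(5)]
    by (rule word_concat_in_gen_grp) (use R1_in R1_inv_in x_in x_inv_in y_in y_inv_in in auto)
  then have "word p ''c'' ** word p x_inv_word ** matrix_inv (word p ''c'') \<in> gen_grp S"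
    using x_inv_in matrix_inv_gen_grp[OF S_invertible] by (blast intro: gen_grp.intros)
  moreover have "word p ''c'' ** word p x_inv_word ** matrix_inv (word p ''c'') = R2 p rhoS2 1 1"
    using invertible_matrix_inv_mult[OF R3_inv]
    by (simp add: x_inv_word_def letter_def matrix_mul_assoc) (simp flip: matrix_mul_assoc)
  ultimately show ?thesis
    using R1_in R3_in by (auto simp: letter_def intro: gen_grp.gen_elem)
qed

end

theorem theorem11p4:
  fixes p :: nat
  assumes "p \<in> {4, 5}"
  defines "\<rho> \<equiv> rhoS2" and "\<sigma> \<equiv> (1::complex)" and "\<tau> \<equiv> (1::complex)"
  defines "\<Gamma> \<equiv> TGroup p \<rho> \<sigma> \<tau>"
      and "H \<equiv> Hmat p \<rho> \<sigma> \<tau>"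
  defines "A \<equiv> (let M = R1 p \<rho> \<sigma> \<tau> ** R2 p \<rho> \<sigma> \<tau> ** R3 p \<rho> \<sigma> \<tau>
                           ** matrix_inv (R2 p \<rho> \<sigma> \<tau>)
               in M ** M ** M ** M ** M)"
  shows "gen_grp (Stab \<Gamma> (mirror H (R1 p \<rho> \<sigma> \<tau>)) \<union> Stab \<Gamma> (mirror H A)) = \<Gamma>"
proof -
  let ?S = "Stab \<Gamma> (mirror H (word p ''a'')) \<union> Stab \<Gamma> (mirror H (word p A_word))"
  have "R1 p \<rho> \<sigma> \<tau> = word p ''a''" and "A = word p A_word"
    by (simp_all add: \<rho>_def \<sigma>_def \<tau>_def A_def A_word_eq letter_def)
  moreover have "gen_grp ?S = gen_grp {R1 p rhoS2 1 1, R2 p rhoS2 1 1, R3 p rhoS2 1 1}"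
  proof (rule gen_grp_eqI)
    show "s \<in> {R1 p rhoS2 1 1, R2 p rhoS2 1 1, R3 p rhoS2 1 1} \<Longrightarrow> invertible s" for s
      using generators_invertible_unitary[OF assms(1)] by blast
    show "?S \<subseteq> gen_grp {R1 p rhoS2 1 1, R2 p rhoS2 1 1, R3 p rhoS2 1 1}"
      by (auto simp: Stab_def \<Gamma>_def TGroup_def \<rho>_def \<sigma>_def \<tau>_def)
    show "{R1 p rhoS2 1 1, R2 p rhoS2 1 1, R3 p rhoS2 1 1} \<subseteq> gen_grp ?S"
      using generators_in_gen_grp_Stab[OF assms(1)] by (simp add: \<Gamma>_def H_def \<rho>_def \<sigma>_def \<tau>_def)
  qed
  ultimately show ?thesis
    by (simp add: \<Gamma>_def TGroup_def \<rho>_def \<sigma>_def \<tau>_def)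
qed

end
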